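(* Let $L$ be a lattice that has no doubly reducible elements, and let $a_1,a_2,a_3,b_1,b_2,b_3$ be six distinct elements of $L$ such that $a_1<a_2<a_3$, $b_1<b_2<b_3$, $a_1<b_3$ and $b_1<a_3$. Assume moreover that $a_2\parallel b_i$ for all $1\le i\le 3$, that $a_i\parallel b_2$ for all $1\le i\le 3$, that $a_2\vee b_2=a_3\vee b_3$, and that $a_2\wedge b_2=a_1\wedge b_1$. Then $L$ has a sublattice isomorphic to $L_{15}$.
   Context: For elements $x,y$ of a poset, $x\parallel y$ means that neither $x\le y$ nor $y\le x$. An element $x$ of a lattice $L$ is doubly reducible if there exist $x_1,x_2,x_3,x_4\in L$ with $x_1\parallel x_2$, $x_3\parallel x_4$, and $x=x_1\vee x_2=x_3\wedge x_4$. The lattice $L_{15}$ is the ten-element lattice with elements $0,u,v,p,q,s,t,1,g,h$ whose Hasse diagram has exactly the covering relations $0\prec u$, $0\prec v$, $u\prec p$, $v\prec p$, $p\prec q$, $q\prec s$, $q\prec t$, $s\prec 1$, $t\prec 1$, $u\prec g$, $g\prec s$, $v\prec h$, $h\prec t$ (so $p=u\vee v$, $q=s\wedge t$, and $g$ lies strictly between $u$ and $s$, $h$ strictly between $v$ and $t$). *)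

theory Defs
  imports Main
begin

definition incomparable :: "'a::order \<Rightarrow> 'a \<Rightarrow> bool" (infix "\<parallel>" 50) where
  "x \<parallel> y \<longleftrightarrow> \<not> x \<le> y \<and> \<not> y \<le> x"

definition doubly_reducible :: "'a::lattice \<Rightarrow> bool" where
  "doubly_reducible x \<longleftrightarrow>
     (\<exists>x1 x2 x3 x4. x1 \<parallel> x2 \<and> x3 \<parallel> x4 \<and> x = sup x1 x2 \<and> x = inf x3 x4)"

datatype l15 = Z | U | V | P | Q | S | T | One | G | H

definition cov15 :: "l15 \<Rightarrow> l15 \<Rightarrow> bool" where
  "cov15 x y \<longleftrightarrow> (x, y) \<in> {(Z,U), (Z,V), (U,P), (V,P), (P,Q), (Q,S), (Q,T),
                              (S,One), (T,One), (U,G), (G,S), (V,H), (H,T)}"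

definition le15 :: "l15 \<Rightarrow> l15 \<Rightarrow> bool" where
  "le15 = cov15\<^sup>*\<^sup>*"

text \<open>L has a sublattice isomorphic to L15: there is a map f from L15 into L
  that is an order embedding (hence injective and an order isomorphism onto its
  image) whose image is closed under joins and meets of L, i.e. is a sublattice.\<close>
definition has_sublattice_L15 :: "'a::lattice itself \<Rightarrow> bool" where
  "has_sublattice_L15 _ \<longleftrightarrow>
     (\<exists>f :: l15 \<Rightarrow> 'a.
        (\<forall>x y. f x \<le> f y \<longleftrightarrow> le15 x y) \<and>
        (\<forall>x y. sup (f x) (f y) \<in> range f \<and> inf (f x) (f y) \<in> range f))"

end

theory Submission
  imports Defs
begin

text \<open>Put \<open>u = a2 \<sqinter> b3\<close>, \<open>v = b2 \<sqinter> a3\<close>, \<open>s = a2 \<squnion> v\<close>, \<open>t = b2 \<squnion> u\<close>,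
  \<open>p = u \<squnion> v\<close> and \<open>q = s \<sqinter> t\<close>. The elements \<open>a1 \<le> u\<close> and \<open>b1 \<le> v\<close> witness \<open>u \<parallel> v\<close>, and
  \<open>a2 \<le> s\<close>, \<open>b2 \<le> t\<close> witness \<open>s \<parallel> t\<close>; hence \<open>p\<close> is a join and \<open>q\<close> a meet of incomparable
  elements, and \<open>p \<le> q\<close> is strict because no element is doubly reducible. Together with \<open>a2 \<sqinter> b2\<close>,
  \<open>a2 \<squnion> b2\<close>, \<open>a2\<close> and \<open>b2\<close> these elements form a copy of L15, and all the required
  joins and meets follow from the order relations alone, symmetrically in the two chains.\<close>

lemma le15_iff:
  "le15 x y \<longleftrightarrow> x = y \<or> x = Z \<or> y = One \<or>
     (x, y) \<in> {(U,P), (U,Q), (U,S), (U,T), (U,G), (V,P), (V,Q), (V,S), (V,T), (V,H),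
                (P,Q), (P,S), (P,T), (Q,S), (Q,T), (G,S), (H,T)}"
  (is "_ \<longleftrightarrow> ?table x y")
proof
  show "?table x y" if "le15 x y"
    using that unfolding le15_def
  proof (induction rule: rtranclp_induct)
    case (step y z)
    then show ?case by (cases x; cases y; cases z) (auto simp: cov15_def)
  qed simp
  have covers: "cov15 Z U" "cov15 Z V" "cov15 U P" "cov15 V P" "cov15 P Q" "cov15 Q S"
    "cov15 Q T" "cov15 S One" "cov15 T One" "cov15 U G" "cov15 G S" "cov15 V H" "cov15 H T"
    by (simp_all add: cov15_def)
  show "le15 x y" if "?table x y"
    using that unfolding le15_def
    by (cases x; cases y; simp) (blast intro: covers[THEN converse_rtranclp_into_rtranclp[of cov15]])+
qed

text \<open>\<open>U, V, G, H, Q\<close> are the join-irreducibles and \<open>P, G, H, S, T\<close> the meet-irreducibles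
  of L15.\<close>

lemma le15_separated_by_irreducibles:
  assumes "\<not> le15 x y"
  shows "\<exists>j \<in> {U, V, G, H, Q}. \<exists>m \<in> {P, G, H, S, T}. le15 j x \<and> le15 y m \<and> \<not> le15 j m"
  using assms by (cases x; cases y) (simp_all add: le15_iff)

lemma le_if_rtranclp:
  fixes f :: "'b \<Rightarrow> 'a::preorder"
  assumes "\<And>x y. r x y \<Longrightarrow> f x \<le> f y" and "r\<^sup>*\<^sup>* x y"
  shows "f x \<le> f y"
  using assms(2) by induction (auto intro: order_trans assms(1))

lemma le_iff_if_separated:
  fixes f :: "'b \<Rightarrow> 'a::preorder"
  assumes mono: "\<And>x y. R x y \<Longrightarrow> f x \<le> f y"
    and separated: "\<And>x y. \<not> R x y \<Longrightarrow> \<exists>j m. R j x \<and> R y m \<and> \<not> f j \<le> f m"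
  shows "f x \<le> f y \<longleftrightarrow> R x y"
  by (meson mono order_trans separated)

lemma sup_inf_closed_if_incomparable_closed:
  fixes f :: "'b \<Rightarrow> 'a::lattice"
  assumes "\<And>x y. f x \<parallel> f y \<Longrightarrow> sup (f x) (f y) \<in> range f \<and> inf (f x) (f y) \<in> range f"
  shows "sup (f x) (f y) \<in> range f \<and> inf (f x) (f y) \<in> range f"
  using assms[of x y] unfolding incomparable_def
  by (metis inf.absorb1 inf.absorb2 rangeI sup.absorb1 sup.absorb2)

lemma has_sublattice_L15I:
  fixes f :: "l15 \<Rightarrow> 'a::lattice"
  assumes covers: "\<And>x y. cov15 x y \<Longrightarrow> f x \<le> f y"
    and irreducibles: "\<And>j m. j \<in> {U, V, G, H, Q} \<Longrightarrow> m \<in> {P, G, H, S, T} \<Longrightarrow>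
          \<not> le15 j m \<Longrightarrow> \<not> f j \<le> f m"
    and incomparables: "\<And>x y. \<not> le15 x y \<Longrightarrow> \<not> le15 y x \<Longrightarrow>
          sup (f x) (f y) \<in> range f \<and> inf (f x) (f y) \<in> range f"
  shows "has_sublattice_L15 TYPE('a)"
proof -
  have mono: "le15 x y \<Longrightarrow> f x \<le> f y" for x y
    using covers le_if_rtranclp unfolding le15_def by metis
  have embedding: "f x \<le> f y \<longleftrightarrow> le15 x y" for x y
  proof (rule le_iff_if_separated)
    show "\<exists>j m. le15 j x \<and> le15 y m \<and> \<not> f j \<le> f m" if "\<not> le15 x y" for x y
      using le15_separated_by_irreducibles[OF that] irreducibles by blast
  qed (rule mono)
  have "sup (f x) (f y) \<in> range f \<and> inf (f x) (f y) \<in> range f" for x y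
    by (rule sup_inf_closed_if_incomparable_closed)
      (use incomparables embedding in \<open>auto simp: incomparable_def\<close>)
  with embedding show ?thesis
    unfolding has_sublattice_L15_def by blast
qed

locale crossing_chains =
  fixes a1 a2 a3 b1 b2 b3 :: "'a::lattice"
  assumes a1_le_a2: "a1 \<le> a2" and a2_le_a3: "a2 \<le> a3"
    and b1_le_b2: "b1 \<le> b2" and b2_le_b3: "b2 \<le> b3"
    and a1_le_b3: "a1 \<le> b3" and b1_le_a3: "b1 \<le> a3"
    and a2_nle_b2: "\<not> a2 \<le> b2" and b2_nle_a2: "\<not> b2 \<le> a2"
    and a2_nle_b3: "\<not> a2 \<le> b3" and b2_nle_a3: "\<not> b2 \<le> a3"
    and a1_nle_b2: "\<not> a1 \<le> b2" and b1_nle_a2: "\<not> b1 \<le> a2"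
begin

definition lo :: 'a where "lo = inf a2 b2"
definition hi :: 'a where "hi = sup a2 b2"
definition u :: 'a where "u = inf a2 b3"
definition v :: 'a where "v = inf b2 a3"
definition s :: 'a where "s = sup a2 v"
definition t :: 'a where "t = sup b2 u"
definition p :: 'a where "p = sup u v"
definition q :: 'a where "q = inf s t"

sublocale swap: crossing_chains b1 b2 b3 a1 a2 a3
  by unfold_locales (fact b1_le_b2 b2_le_b3 a1_le_a2 a2_le_a3 b1_le_a3 a1_le_b3
      b2_nle_a2 a2_nle_b2 b2_nle_a3 a2_nle_b3 b1_nle_a2 a1_nle_b2)+

lemma swap_eqs: "swap.lo = lo" "swap.hi = hi" "swap.u = v" "swap.v = u" "swap.s = t" "swap.t = s"
    "swap.p = p" "swap.q = q"
  unfolding swap.lo_def lo_def swap.hi_def hi_def swap.u_def u_def swap.v_def v_def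
    swap.s_def s_def swap.t_def t_def swap.p_def p_def swap.q_def q_def
  by (simp_all add: inf.commute sup.commute)

lemma u_le_a2: "u \<le> a2"
  unfolding u_def by simp

lemma u_le_b3: "u \<le> b3"
  unfolding u_def by simp

lemma a2_le_s: "a2 \<le> s"
  unfolding s_def by simp

lemma v_le_p: "v \<le> p"
  unfolding p_def by simp

lemma u_le_p: "u \<le> p"
  unfolding p_def by simp

lemma p_le_q: "p \<le> q"
  unfolding p_def q_def s_def t_def u_def v_def by (simp add: le_infI1 le_infI2 le_supI1 le_supI2)

lemma q_le_t: "q \<le> t"
  unfolding q_def by simp

lemma q_le_s: "q \<le> s"
  unfolding q_def by simp

lemma lo_le_u: "lo \<le> u"
  unfolding lo_def u_def using b2_le_b3 by (simp add: le_infI2)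

lemma s_le_hi: "s \<le> hi"
  unfolding s_def v_def hi_def by (simp add: le_supI2)

lemma t_le_b3: "t \<le> b3"
  unfolding t_def using b2_le_b3 u_le_b3 by simp

lemma p_le_t: "p \<le> t"
  unfolding p_def t_def v_def by (simp add: le_supI1)

lemma u_nle_b2: "\<not> u \<le> b2"
proof
  assume "u \<le> b2"
  have "a1 \<le> u"
    unfolding u_def using a1_le_a2 a1_le_b3 by simp
  with \<open>u \<le> b2\<close> a1_nle_b2 show False by simp
qed

lemma a2_nle_t: "\<not> a2 \<le> t"
  using a2_nle_b3 t_le_b3 order_trans by blast

lemma a2_nle_p: "\<not> a2 \<le> p"
  using a2_nle_t p_le_t order_trans by blast

lemma q_nle_b2: "\<not> q \<le> b2"
  using u_nle_b2 u_le_p p_le_q order_trans by blast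

lemma inf_a2_t: "inf a2 t = u"
proof (rule antisym)
  show "inf a2 t \<le> u"
    unfolding u_def using t_le_b3 by (simp add: le_infI2)
  show "u \<le> inf a2 t"
    unfolding t_def using u_le_a2 by simp
qed

lemma inf_a2_p: "inf a2 p = u"
proof (rule antisym)
  show "inf a2 p \<le> u"
    using p_le_t inf_a2_t by (metis inf_mono order_refl)
  show "u \<le> inf a2 p"
    using u_le_a2 u_le_p by simp
qed

lemma inf_a2_q: "inf a2 q = u"
proof (rule antisym)
  show "inf a2 q \<le> u"
    using q_le_t inf_a2_t by (metis inf_mono order_refl)
  show "u \<le> inf a2 q"
    using u_le_a2 u_le_p p_le_q by simp
qed

lemma sup_a2_p: "sup a2 p = s"
  unfolding p_def s_def using u_le_a2 by (auto intro!: antisym simp: le_supI1 le_supI2)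

lemma sup_a2_t: "sup a2 t = hi"
  unfolding t_def hi_def using u_le_a2 by (auto intro!: antisym simp: le_supI1 le_supI2)

lemma inf_u_b2: "inf u b2 = lo"
  unfolding u_def lo_def using b2_le_b3 by (simp add: inf.absorb2 inf_assoc)

lemma sup_a2_q: "sup a2 q = s"
proof (rule antisym)
  show "sup a2 q \<le> s"
    using a2_le_s q_le_s by simp
  show "s \<le> sup a2 q"
    unfolding s_def using v_le_p p_le_q by (simp add: le_supI2)
qed

lemma inf_u_v: "inf u v = lo"
  unfolding u_def v_def lo_def using b2_le_b3 a2_le_a3
  by (auto intro!: antisym simp: le_infI1 le_infI2)

end

text \<open>The facts of the interpretation \<open>swap\<close> proved above only become visible in a new context.\<close>

context crossing_chains
begin

lemma q_nle_p_if_not_doubly_reducible: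
  assumes "\<not> doubly_reducible p"
  shows "\<not> q \<le> p"
proof
  assume "q \<le> p"
  with p_le_q have "p = inf s t"
    unfolding q_def by (rule antisym)
  moreover have "u \<parallel> v"
    using u_nle_b2 swap.u_nle_b2 swap.u_le_a2 u_le_a2 order_trans
    unfolding incomparable_def swap_eqs by blast
  moreover have "s \<parallel> t"
    using a2_nle_t swap.a2_nle_t a2_le_s swap.a2_le_s order_trans
    unfolding incomparable_def swap_eqs by blast
  ultimately have "doubly_reducible p"
    unfolding doubly_reducible_def p_def by blast
  with assms show False ..
qed

lemma sup_s_t: "sup s t = hi"
proof (rule antisym)
  show "sup s t \<le> hi"
    using s_le_hi swap.s_le_hi unfolding swap_eqs by simp
  show "hi \<le> sup s t"
    unfolding hi_def using a2_le_s swap.a2_le_s unfolding swap_eqs by (simp add: le_supI1 le_supI2)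
qed

primrec embed :: "l15 \<Rightarrow> 'a" where
  "embed Z = lo" | "embed U = u" | "embed V = v" | "embed P = p" | "embed Q = q"
| "embed S = s" | "embed T = t" | "embed One = hi" | "embed G = a2" | "embed H = b2"

lemma range_embed: "range embed = {lo, u, v, p, q, s, t, hi, a2, b2}"
proof -
  have univ: "(UNIV :: l15 set) = {Z, U, V, P, Q, S, T, One, G, H}"
    by (rule UNIV_eq_I, case_tac x) simp_all
  show ?thesis
    unfolding univ by simp
qed

lemma has_sublattice_L15_if_not_doubly_reducible:
  assumes "\<not> doubly_reducible p"
  shows "has_sublattice_L15 TYPE('a)"
proof (rule has_sublattice_L15I[of embed])
  note swapped = swap.lo_le_u swap.s_le_hi swap.u_le_a2 swap.a2_le_s
    swap.u_nle_b2 swap.a2_nle_t swap.a2_nle_p swap.q_nle_b2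
    swap.inf_u_b2 swap.inf_a2_t swap.inf_a2_p swap.inf_a2_q swap.sup_a2_p swap.sup_a2_q swap.sup_a2_t
  note mirrored = swapped[unfolded swap_eqs]
  show "embed x \<le> embed y" if "cov15 x y" for x y
    using that unfolding cov15_def
    by (auto simp: mirrored lo_le_u u_le_p v_le_p p_le_q q_le_s q_le_t s_le_hi u_le_a2 a2_le_s)
  show "\<not> embed j \<le> embed m" if "j \<in> {U, V, G, H, Q}" "m \<in> {P, G, H, S, T}" "\<not> le15 j m" for j m
    using that
    by (simp add: le15_iff; elim disjE; simp add: mirrored u_nle_b2 a2_nle_t a2_nle_p q_nle_b2
        a2_nle_b2 b2_nle_a2 q_nle_p_if_not_doubly_reducible[OF assms])
  show "sup (embed x) (embed y) \<in> range embed \<and> inf (embed x) (embed y) \<in> range embed"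
    if "\<not> le15 x y" "\<not> le15 y x" for x y
  proof -
    note joins_meets = lo_def[symmetric] hi_def[symmetric] p_def[symmetric] q_def[symmetric]
      s_def[symmetric] t_def[symmetric] inf_u_v inf_u_b2 sup_a2_p inf_a2_p sup_a2_q inf_a2_q
      sup_a2_t inf_a2_t sup_s_t mirrored
    show ?thesis
      using that by (cases x; cases y) (simp_all add: le15_iff range_embed
          joins_meets[simplified sup.commute inf.commute] sup.commute inf.commute)
  qed
qed

end

theorem lemma3p1:
  fixes a1 a2 a3 b1 b2 b3 :: "'a::lattice"
  assumes no_dr: "\<forall>x::'a. \<not> doubly_reducible x"
    and distinct: "distinct [a1, a2, a3, b1, b2, b3]"
    and "a1 < a2" and "a2 < a3" and "b1 < b2" and "b2 < b3"
    and "a1 < b3" and "b1 < a3"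
    and "a2 \<parallel> b1" and "a2 \<parallel> b2" and "a2 \<parallel> b3"
    and "a1 \<parallel> b2" and "a3 \<parallel> b2"
    and "sup a2 b2 = sup a3 b3"
    and "inf a2 b2 = inf a1 b1"
  shows "has_sublattice_L15 TYPE('a)"
proof -
  interpret crossing_chains a1 a2 a3 b1 b2 b3
    using assms(3-13) unfolding incomparable_def by unfold_locales auto
  show ?thesis
    using no_dr by (blast intro: has_sublattice_L15_if_not_doubly_reducible)
qed

end
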